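(* Fix $\theta\in[0,1]$ and let \[ A_r(\theta)=\Big[1+\theta\Big(\frac{2r}{n}-1\Big)\Big]\frac{B_r}{r},\qquad 1\le r\le n-1 . \] (i) For any $r^*(\theta)\in\arg\max\{A_r(\theta):1\le r\le n-1\}$, the prize schedule ${\bf v}^{r^*(\theta)}$ (awarding $r^*(\theta)$ equal prizes $1/r^*(\theta)$ at the top and zero to everyone else) maximizes $M({\bf v},\theta)$ over ${\bf v}\in\mathcal V$, and hence maximizes the equilibrium effort; the maximal value is $\max_r A_r(\theta)$. (ii) The optimal number of top prizes is weakly increasing in loss aversion: if $0\le\theta<\theta'\le1$, then $\max\arg\max_r A_r(\theta)\le\max\arg\max_r A_r(\theta')$ and $\min\arg\max_r A_r(\theta)\le\min\arg\max_r A_r(\theta')$.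
   Context: Fix an integer $n\ge 2$ and a noise distribution with cdf $F$ and density $f$ on $\mathbb R$ (integrals finite). For $r=1,\dots,n$ let $g_r(u)=u^{n-r}(1-u)^{r-1}$ and $\beta_r=\binom{n-1}{r-1}\int g_r'(F(t))f(t)^2dt$ (marginal effect of own effort on the probability of being ranked $r$ in a symmetric profile); $B_r=\sum_{k=1}^r\beta_k$, which for $1\le r\le n-1$ equals $r\binom{n-1}{r}\int F(t)^{n-1-r}[1-F(t)]^{r-1}f(t)^2dt>0$, and $B_n=0$. Let $\mathcal V=\{{\bf v}\in\mathbb R^n: v_1\ge\dots\ge v_n\ge 0,\ \sum_r v_r=1\}$, $R({\bf v})=\sum_r\beta_rv_r$, $L({\bf v})=-\frac1n\sum_{r=1}^n\sum_{s<r}(\beta_r+\beta_s)(v_s-v_r)$, $M({\bf v},\theta)=R({\bf v})+\theta L({\bf v})$, $\theta\in[0,1]$. For $1\le s\le n-1$, ${\bf v}^s=(\frac1s,\dots,\frac1s,0,\dots,0)$ has $s$ nonzero prizes. The symmetric equilibrium effort solves $c'(x^* )=M({\bf v},\theta)$ for a strictly increasing, strictly convex, differentiable cost $c$ with $c(0)=c'(0)=0$, so it is strictly increasing in $M$. *)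

theory Defs
  imports "HOL-Analysis.Analysis"
begin

text \<open>Noise distribution: density f (nonnegative, Borel, integrating to 1, with
  f squared integrable so that all integrals below are finite) and cdf F.\<close>
definition noise_dist :: "(real \<Rightarrow> real) \<Rightarrow> (real \<Rightarrow> real) \<Rightarrow> bool" where
  "noise_dist F f \<longleftrightarrow>
     (\<forall>t. 0 \<le> f t) \<and> f \<in> borel_measurable lborel \<and> integrable lborel f \<and>
     (\<integral>t. f t \<partial>lborel) = 1 \<and> integrable lborel (\<lambda>t. (f t)^2) \<and>
     (\<forall>t. F t = (LINT s:{..t}|lborel. f s))"

definition gfun :: "nat \<Rightarrow> nat \<Rightarrow> real \<Rightarrow> real" where
  "gfun n r u = u ^ (n - r) * (1 - u) ^ (r - 1)"

definition beta :: "nat \<Rightarrow> (real \<Rightarrow> real) \<Rightarrow> (real \<Rightarrow> real) \<Rightarrow> nat \<Rightarrow> real" where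
  "beta n F f r = real ((n - 1) choose (r - 1)) *
      (\<integral>t. deriv (gfun n r) (F t) * (f t)^2 \<partial>lborel)"

definition Bsum :: "nat \<Rightarrow> (real \<Rightarrow> real) \<Rightarrow> (real \<Rightarrow> real) \<Rightarrow> nat \<Rightarrow> real" where
  "Bsum n F f r = (\<Sum>k=1..r. beta n F f k)"

definition prizeV :: "nat \<Rightarrow> (nat \<Rightarrow> real) set" where
  "prizeV n = {v. (\<forall>r\<in>{1..<n}. v (Suc r) \<le> v r) \<and> 0 \<le> v n \<and> (\<Sum>r=1..n. v r) = 1}"

definition Rfun :: "nat \<Rightarrow> (real \<Rightarrow> real) \<Rightarrow> (real \<Rightarrow> real) \<Rightarrow> (nat \<Rightarrow> real) \<Rightarrow> real" where
  "Rfun n F f v = (\<Sum>r=1..n. beta n F f r * v r)"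

definition Lfun :: "nat \<Rightarrow> (real \<Rightarrow> real) \<Rightarrow> (real \<Rightarrow> real) \<Rightarrow> (nat \<Rightarrow> real) \<Rightarrow> real" where
  "Lfun n F f v = - (1 / real n) *
      (\<Sum>r=1..n. \<Sum>s=1..<r. (beta n F f r + beta n F f s) * (v s - v r))"

definition Mfun :: "nat \<Rightarrow> (real \<Rightarrow> real) \<Rightarrow> (real \<Rightarrow> real) \<Rightarrow> (nat \<Rightarrow> real) \<Rightarrow> real \<Rightarrow> real" where
  "Mfun n F f v \<theta> = Rfun n F f v + \<theta> * Lfun n F f v"

definition topv :: "nat \<Rightarrow> nat \<Rightarrow> real" where
  "topv s = (\<lambda>r. if 1 \<le> r \<and> r \<le> s then 1 / real s else 0)"

definition Acoef :: "nat \<Rightarrow> (real \<Rightarrow> real) \<Rightarrow> (real \<Rightarrow> real) \<Rightarrow> real \<Rightarrow> nat \<Rightarrow> real" where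
  "Acoef n F f \<theta> r = (1 + \<theta> * (2 * real r / real n - 1)) * Bsum n F f r / real r"

definition argmaxA :: "nat \<Rightarrow> (real \<Rightarrow> real) \<Rightarrow> (real \<Rightarrow> real) \<Rightarrow> real \<Rightarrow> nat set" where
  "argmaxA n F f \<theta> = {r \<in> {1..n-1}. \<forall>k\<in>{1..n-1}. Acoef n F f \<theta> k \<le> Acoef n F f \<theta> r}"

definition admissible_cost :: "(real \<Rightarrow> real) \<Rightarrow> bool" where
  "admissible_cost c \<longleftrightarrow>
     strict_mono_on {0..} c \<and>
     (\<forall>x\<in>{0..}. \<forall>y\<in>{0..}. x \<noteq> y \<longrightarrow>
        (\<forall>t::real. 0 < t \<and> t < 1 \<longrightarrow> c ((1 - t) * x + t * y) < (1 - t) * c x + t * c y)) \<and>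
     (\<forall>x\<ge>0. c differentiable at x) \<and> c 0 = 0 \<and> deriv c 0 = 0"

end

theory Submission
  imports Defs
begin

text \<open>\<open>M\<close> is linear in the prize schedule and every schedule is a convex combination of the
  top-heavy schedules \<open>v\<^sup>s\<close>, so the maximum of \<open>M\<close> is attained at some \<open>v\<^sup>s\<close>. Summing the
  pairwise loss terms gives \<open>M(v\<^sup>s, \<theta>) = A\<^sub>s(\<theta>)\<close>, and \<open>A\<^sub>n = 0 \<le> A\<^sub>r\<close> because each partial
  sum \<open>B\<^sub>r\<close> telescopes to the integral of the nonnegative density
  \<open>r C(n-1,r) F^(n-1-r) (1-F)^(r-1) f^2\<close>, which vanishes identically for \<open>r = n\<close>.
  Effort is maximised as well, since strict convexity makes \<open>c'\<close> strictly increasing.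
  For the comparative statics, raising \<open>\<theta>\<close> multiplies \<open>A\<^sub>r = (1 + \<theta>(2r/n - 1)) B\<^sub>r/r\<close> by a
  factor that increases with \<open>r\<close>; this single-crossing property gives the Milgrom--Shannon
  monotonicity of the largest and of the smallest maximiser.\<close>

definition strict_convex_on :: "real set \<Rightarrow> (real \<Rightarrow> real) \<Rightarrow> bool" where
  "strict_convex_on S c \<longleftrightarrow>
     (\<forall>x\<in>S. \<forall>y\<in>S. x \<noteq> y \<longrightarrow>
        (\<forall>t. 0 < t \<and> t < 1 \<longrightarrow> c ((1 - t) * x + t * y) < (1 - t) * c x + t * c y))"

lemma strict_convex_on_three_slopes:
  assumes c: "strict_convex_on S c" and pq: "p \<in> S" "q \<in> S" and y: "p < y" "y < q"
  shows "(c y - c p) / (y - p) < (c q - c p) / (q - p)"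
    and "(c q - c p) / (q - p) < (c q - c y) / (q - y)"
proof -
  define t where "t = (y - p) / (q - p)"
  have t: "0 < t" "t < 1" "1 - t = (q - y) / (q - p)" using y by (auto simp: t_def field_simps)
  have "t * (q - p) = y - p" using y by (simp add: t_def)
  then have "(1 - t) * p + t * q = y" by (simp add: algebra_simps)
  with c pq t y have "c y < (1 - t) * c p + t * c q"
    unfolding strict_convex_on_def by force
  also have "(1 - t) * c p + t * c q = (q - y) / (q - p) * c p + (y - p) / (q - p) * c q"
    by (simp only: t(3)) (simp add: t_def)
  also have "\<dots> = ((q - y) * c p + (y - p) * c q) / (q - p)"
    by (simp add: add_divide_distrib)
  finally have chord: "c y * (q - p) < (q - y) * c p + (y - p) * c q"
    using y by (simp add: pos_less_divide_eq)
  show "(c y - c p) / (y - p) < (c q - c p) / (q - p)"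
    using chord y by (simp add: field_simps)
  show "(c q - c p) / (q - p) < (c q - c y) / (q - y)"
    using chord y by (simp add: field_simps)
qed

lemma strict_convex_on_deriv_le_slope:
  assumes c: "strict_convex_on S c" and ab: "a \<in> S" "b \<in> S" "a < b"
    and d: "(c has_real_derivative d) (at a)"
  shows "d \<le> (c b - c a) / (b - a)"
proof -
  have lim: "((\<lambda>y. (c y - c a) / (y - a)) \<longlongrightarrow> d) (at_right a)"
    using has_field_derivative_at_within[OF d] unfolding has_field_derivative_iff .
  have "eventually (\<lambda>y. (c y - c a) / (y - a) \<le> (c b - c a) / (b - a)) (at_right a)"
    using eventually_at_right_real[OF ab(3)]
    by eventually_elim (use strict_convex_on_three_slopes(1)[OF c ab(1,2)] in force)
  then show ?thesis by (rule tendsto_upperbound[OF lim]) simp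
qed

lemma strict_convex_on_slope_le_deriv:
  assumes c: "strict_convex_on S c" and ab: "a \<in> S" "b \<in> S" "a < b"
    and d: "(c has_real_derivative d) (at b)"
  shows "(c b - c a) / (b - a) \<le> d"
proof -
  have lim: "((\<lambda>y. (c y - c b) / (y - b)) \<longlongrightarrow> d) (at_left b)"
    using has_field_derivative_at_within[OF d] unfolding has_field_derivative_iff .
  have "eventually (\<lambda>y. (c b - c a) / (b - a) \<le> (c y - c b) / (y - b)) (at_left b)"
    using eventually_at_left_real[OF ab(3)]
  proof eventually_elim
    case (elim y)
    then have "(c b - c a) / (b - a) < (c b - c y) / (b - y)"
      using strict_convex_on_three_slopes(2)[OF c ab(1,2)] by auto
    also have "\<dots> = (c y - c b) / (y - b)"
      by (metis minus_diff_eq minus_divide_divide)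
    finally show ?case by simp
  qed
  then show ?thesis by (rule tendsto_lowerbound[OF lim]) simp
qed

lemma strict_convex_on_deriv_strict_mono:
  assumes c: "strict_convex_on S c" and ab: "a \<in> S" "b \<in> S" "a < b" and S: "convex S"
    and da: "(c has_real_derivative da) (at a)" and db: "(c has_real_derivative db) (at b)"
  shows "da < db"
proof -
  define m where "m = (a + b) / 2"
  have "(1 / 2) *\<^sub>R a + (1 / 2) *\<^sub>R b \<in> S"
    by (rule convexD[OF S ab(1,2)]) auto
  then have m: "a < m" "m < b" "m \<in> S"
    using ab by (auto simp: m_def add_divide_distrib)
  have "da \<le> (c m - c a) / (m - a)"
    by (rule strict_convex_on_deriv_le_slope[OF c ab(1) m(3) m(1) da])
  also have "\<dots> < (c b - c a) / (b - a)"
    by (rule strict_convex_on_three_slopes(1)[OF c ab(1,2) m(1,2)])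
  also have "\<dots> < (c b - c m) / (b - m)"
    by (rule strict_convex_on_three_slopes(2)[OF c ab(1,2) m(1,2)])
  also have "\<dots> \<le> db"
    by (rule strict_convex_on_slope_le_deriv[OF c m(3) ab(2) m(2) db])
  finally show ?thesis .
qed

lemma admissible_cost_deriv_le_imp_le:
  assumes c: "admissible_cost c" and x: "0 \<le> x" "0 \<le> x'" and le: "deriv c x \<le> deriv c x'"
  shows "x \<le> x'"
proof (rule ccontr)
  assume "\<not> x \<le> x'"
  have sc: "strict_convex_on {0..} c"
    using c by (simp add: admissible_cost_def strict_convex_on_def)
  have d: "(c has_real_derivative deriv c y) (at y)" if "0 \<le> y" for y
    using c that by (simp add: admissible_cost_def DERIV_deriv_iff_real_differentiable)
  have "deriv c x' < deriv c x"
    by (rule strict_convex_on_deriv_strict_mono[OF sc _ _ _ _ d d])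
       (use x \<open>\<not> x \<le> x'\<close> in \<open>simp_all add: convex_real_interval\<close>)
  with le show False by simp
qed

definition dgfun :: "nat \<Rightarrow> nat \<Rightarrow> real \<Rightarrow> real" where
  "dgfun n r u = real (n - r) * u ^ (n - r - 1) * (1 - u) ^ (r - 1)
                 - real (r - 1) * u ^ (n - r) * (1 - u) ^ (r - 1 - 1)"

lemma deriv_gfun: "deriv (gfun n r) = dgfun n r"
proof
  fix u :: real
  have "(gfun n r has_real_derivative dgfun n r u) (at u)"
    unfolding gfun_def dgfun_def
    by (auto intro!: derivative_eq_intros simp: algebra_simps)
  then show "deriv (gfun n r) u = dgfun n r u" by (rule DERIV_imp_deriv)
qed

lemma abs_dgfun_le:
  assumes "0 \<le> u" "u \<le> 1"
  shows "\<bar>dgfun n r u\<bar> \<le> real (n - r) + real (r - 1)"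
proof -
  have a: "\<bar>u ^ (n - r - 1) * (1 - u) ^ (r - 1)\<bar> \<le> 1" "\<bar>u ^ (n - r) * (1 - u) ^ (r - 1 - 1)\<bar> \<le> 1"
    using assms by (auto simp: abs_mult intro!: mult_le_one power_le_one)
  have "\<bar>dgfun n r u\<bar> \<le> real (n - r) * \<bar>u ^ (n - r - 1) * (1 - u) ^ (r - 1)\<bar>
                       + real (r - 1) * \<bar>u ^ (n - r) * (1 - u) ^ (r - 1 - 1)\<bar>"
    unfolding dgfun_def by (rule order_trans[OF abs_triangle_ineq4]) (simp add: abs_mult mult.assoc)
  also have "\<dots> \<le> real (n - r) + real (r - 1)"
    using add_mono[OF mult_left_mono[OF a(1)] mult_left_mono[OF a(2)]] by simp
  finally show ?thesis .
qed

definition Bkernel :: "nat \<Rightarrow> nat \<Rightarrow> real \<Rightarrow> real" where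
  "Bkernel n r u = (\<Sum>k=1..r. real ((n - 1) choose (k - 1)) * dgfun n k u)"

lemma Bkernel_closed_form:
  "n = j + k + 2 \<Longrightarrow>
     Bkernel n (Suc j) u = real (Suc j) * real ((n - 1) choose Suc j) * u ^ k * (1 - u) ^ j"
proof (induction j arbitrary: k)
  case 0
  then show ?case by (simp add: Bkernel_def dgfun_def)
next
  case (Suc j)
  have IH: "Bkernel n (Suc j) u = real (Suc j) * real ((n - 1) choose Suc j) * u ^ Suc k * (1 - u) ^ j"
    using Suc by simp
  have "Suc (Suc j) * ((n - 1) choose Suc (Suc j)) = (n - 1) * ((n - 1 - 1) choose Suc j)"
    by (rule binomial_absorption)
  also have "\<dots> = (n - 1 - Suc j) * ((n - 1) choose Suc j)"
    by (rule binomial_absorb_comp[symmetric])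
  also have "n - 1 - Suc j = Suc k" using Suc.prems by simp
  finally have binom: "real (Suc (Suc j)) * real ((n - 1) choose Suc (Suc j))
                        = real (Suc k) * real ((n - 1) choose Suc j)"
    by (metis of_nat_mult)
  have "Bkernel n (Suc (Suc j)) u
        = Bkernel n (Suc j) u + real ((n - 1) choose Suc j) * dgfun n (Suc (Suc j)) u"
    by (simp add: Bkernel_def)
  also have "\<dots> = real (Suc k) * real ((n - 1) choose Suc j) * u ^ k * (1 - u) ^ Suc j"
    unfolding IH using Suc.prems by (simp add: dgfun_def algebra_simps)
  finally show ?case using binom by simp
qed

lemma Bkernel_nonneg:
  assumes "1 \<le> r" "r \<le> n - 1" "0 \<le> u" "u \<le> 1"
  shows "0 \<le> Bkernel n r u"
proof -
  obtain j where j: "r = Suc j" using assms by (cases r) auto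
  have "n = j + (n - j - 2) + 2" using assms j by simp
  from Bkernel_closed_form[OF this, of u] show ?thesis using j assms by simp
qed

lemma Bkernel_last:
  assumes "n \<ge> 2"
  shows "Bkernel n n u = 0"
proof -
  define j where "j = n - 2"
  have j: "n = j + 0 + 2" using assms by (simp add: j_def)
  have "Bkernel n n u = Bkernel n (Suc j) u + real ((n - 1) choose (n - 1)) * dgfun n n u"
    using j by (simp add: Bkernel_def)
  then show ?thesis using Bkernel_closed_form[OF j, of u] j by (simp add: dgfun_def)
qed

lemma noise_distD:
  assumes "noise_dist F f"
  shows "\<And>t. 0 \<le> f t" "f \<in> borel_measurable lborel" "integrable lborel f"
    "(\<integral>t. f t \<partial>lborel) = 1" "integrable lborel (\<lambda>t. (f t)^2)"
    "\<And>t. F t = (\<integral>s. indicator {..t} s * f s \<partial>lborel)"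
  using assms unfolding noise_dist_def set_lebesgue_integral_def by auto

lemma noise_dist_cdf_bounds:
  assumes "noise_dist F f"
  shows "0 \<le> F t" "F t \<le> 1"
proof -
  note N = noise_distD[OF assms]
  have "integrable lborel (\<lambda>s. indicator {..t} s * f s)"
    using integrable_real_mult_indicator[of "{..t}" lborel f] N(3) by (simp add: mult.commute)
  then have "(\<integral>s. indicator {..t} s * f s \<partial>lborel) \<le> (\<integral>s. f s \<partial>lborel)"
    by (rule integral_mono[OF _ N(3)]) (simp add: N(1) indicator_def)
  then show "F t \<le> 1" using N(4) N(6) by simp
  show "0 \<le> F t" unfolding N(6) by (rule Bochner_Integration.integral_nonneg) (simp add: N(1))
qed

lemma noise_dist_cdf_mono:
  assumes "noise_dist F f"
  shows "mono F"
proof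
  fix s t :: real assume "s \<le> t"
  note N = noise_distD[OF assms]
  have i: "\<And>t. integrable lborel (\<lambda>s. indicator {..t} s * f s)"
    using integrable_real_mult_indicator[of _ lborel f] N(3) by (simp add: mult.commute)
  show "F s \<le> F t" unfolding N(6)
    by (rule integral_mono[OF i i]) (use \<open>s \<le> t\<close> N(1) in \<open>auto simp: indicator_def\<close>)
qed

lemma integrable_dgfun_cdf:
  assumes "noise_dist F f"
  shows "integrable lborel (\<lambda>t. dgfun n k (F t) * (f t)^2)"
proof (rule Bochner_Integration.integrable_bound)
  note N = noise_distD[OF assms]
  show "integrable lborel (\<lambda>t. (real (n - k) + real (k - 1)) * (f t)^2)"
    using N(5) by simp
  have [measurable]: "F \<in> borel_measurable lborel" "f \<in> borel_measurable lborel"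
    using borel_measurable_mono[OF noise_dist_cdf_mono[OF assms]] N(2) by auto
  show "(\<lambda>t. dgfun n k (F t) * (f t)^2) \<in> borel_measurable lborel"
    unfolding dgfun_def by measurable
  show "AE t in lborel. norm (dgfun n k (F t) * (f t)^2) \<le> norm ((real (n - k) + real (k - 1)) * (f t)^2)"
    using abs_dgfun_le[OF noise_dist_cdf_bounds[OF assms]]
    by (intro AE_I2) (simp add: abs_mult mult_right_mono)
qed

lemma Bsum_eq_integral_Bkernel:
  assumes "noise_dist F f"
  shows "Bsum n F f r = (\<integral>t. Bkernel n r (F t) * (f t)^2 \<partial>lborel)"
proof -
  have "Bsum n F f r
        = (\<Sum>k=1..r. \<integral>t. real ((n - 1) choose (k - 1)) * (dgfun n k (F t) * (f t)^2) \<partial>lborel)"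
    unfolding Bsum_def beta_def deriv_gfun by simp
  also have "\<dots> = (\<integral>t. (\<Sum>k=1..r. real ((n - 1) choose (k - 1)) * (dgfun n k (F t) * (f t)^2)) \<partial>lborel)"
    by (rule Bochner_Integration.integral_sum[symmetric]) (simp add: integrable_dgfun_cdf[OF assms])
  also have "\<dots> = (\<integral>t. Bkernel n r (F t) * (f t)^2 \<partial>lborel)"
    unfolding Bkernel_def by (simp add: sum_distrib_right mult.assoc)
  finally show ?thesis .
qed

lemma Bsum_last:
  assumes "noise_dist F f" "n \<ge> 2"
  shows "Bsum n F f n = 0"
  unfolding Bsum_eq_integral_Bkernel[OF assms(1)] Bkernel_last[OF assms(2)] by simp

lemma Bsum_nonneg:
  assumes "noise_dist F f" "1 \<le> r" "r \<le> n - 1"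
  shows "0 \<le> Bsum n F f r"
  unfolding Bsum_eq_integral_Bkernel[OF assms(1)]
  using Bkernel_nonneg noise_dist_cdf_bounds[OF assms(1)] assms(2,3)
  by (intro Bochner_Integration.integral_nonneg) simp

lemma sum_mult_topv:
  assumes "1 \<le> s" "s \<le> n"
  shows "(\<Sum>r=1..n. g r * topv s r) = (\<Sum>r=1..s. g r) / real s"
proof -
  have "(\<Sum>r=1..n. g r * topv s r) = (\<Sum>r=1..s. g r * topv s r)"
    by (rule sum.mono_neutral_right) (use assms in \<open>auto simp: topv_def\<close>)
  also have "\<dots> = (\<Sum>r=1..s. g r / real s)"
    by (rule sum.cong) (auto simp: topv_def)
  finally show ?thesis by (simp add: sum_divide_distrib)
qed

lemma sum_topv:
  assumes "1 \<le> s" "s \<le> n"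
  shows "(\<Sum>r=1..n. topv s r) = 1"
  using sum_mult_topv[OF assms, of "\<lambda>_. 1"] assms by simp

lemma topv_in_prizeV:
  assumes "1 \<le> s" "s \<le> n"
  shows "topv s \<in> prizeV n"
  using sum_topv[OF assms] assms unfolding prizeV_def by (auto simp: topv_def)

text \<open>Only the pairs with \<open>s' \<le> s < r\<close> contribute, each with weight \<open>1/s\<close>.\<close>
lemma sum_pairs_topv:
  assumes "1 \<le> s" "s \<le> n"
  shows "(\<Sum>r=1..n. \<Sum>s'=1..<r. (b r + b s') * (topv s s' - topv s r))
       = (real s * ((\<Sum>r=1..n. b r) - (\<Sum>r=1..s. b r)) + real (n - s) * (\<Sum>r=1..s. b r)) / real s"
proof -
  have top: "(\<Sum>r=1..n. b r) = (\<Sum>r=1..s. b r) + (\<Sum>r\<in>{s<..n}. b r)"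
  proof -
    have "{1..n} = {1..s} \<union> {s<..n}" using assms by force
    then show ?thesis by (simp add: sum.union_disjoint ivl_disj_int)
  qed
  have "(\<Sum>r=1..n. \<Sum>s'=1..<r. (b r + b s') * (topv s s' - topv s r))
      = (\<Sum>r\<in>{s<..n}. \<Sum>s'=1..<r. (b r + b s') * (topv s s' - topv s r))"
    by (rule sum.mono_neutral_right) (auto simp: topv_def)
  also have "\<dots> = (\<Sum>r\<in>{s<..n}. \<Sum>s'=1..s. (b r + b s') / real s)"
  proof (rule sum.cong[OF refl])
    fix r assume r: "r \<in> {s<..n}"
    have "(\<Sum>s'=1..<r. (b r + b s') * (topv s s' - topv s r))
          = (\<Sum>s'=1..s. (b r + b s') * (topv s s' - topv s r))"
      by (rule sum.mono_neutral_right) (use r in \<open>auto simp: topv_def\<close>)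
    also have "\<dots> = (\<Sum>s'=1..s. (b r + b s') / real s)"
      by (rule sum.cong) (use r in \<open>auto simp: topv_def\<close>)
    finally show "(\<Sum>s'=1..<r. (b r + b s') * (topv s s' - topv s r)) = (\<Sum>s'=1..s. (b r + b s') / real s)" .
  qed
  also have "\<dots> = (\<Sum>r\<in>{s<..n}. real s * b r + (\<Sum>s'=1..s. b s')) / real s"
    by (simp add: sum_divide_distrib[symmetric] sum.distrib)
  also have "\<dots> = (real s * (\<Sum>r\<in>{s<..n}. b r) + real (n - s) * (\<Sum>s'=1..s. b s')) / real s"
    by (simp add: sum.distrib sum_distrib_left)
  finally show ?thesis using top by simp
qed

lemma Mfun_topv:
  assumes "1 \<le> s" "s \<le> n" and last: "Bsum n F f n = 0"
  shows "Mfun n F f (topv s) \<theta> = Acoef n F f \<theta> s"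
proof -
  have B: "(\<Sum>r=1..n. beta n F f r) = 0" "(\<Sum>r=1..s. beta n F f r) = Bsum n F f s"
    using last by (simp_all add: Bsum_def)
  have R: "Rfun n F f (topv s) = Bsum n F f s / real s"
    unfolding Rfun_def Bsum_def by (rule sum_mult_topv[OF assms(1,2)])
  have L: "Lfun n F f (topv s) = - (1 / real n) * ((real n - 2 * real s) * Bsum n F f s / real s)"
    unfolding Lfun_def sum_pairs_topv[OF assms(1,2)] B
    using assms by (simp add: of_nat_diff algebra_simps)
  have "real s > 0" "real n > 0" using assms by auto
  then show ?thesis unfolding Mfun_def Acoef_def R L by (simp add: field_simps)
qed

lemma Rfun_sum:
  assumes "finite S"
  shows "Rfun n F f (\<lambda>r. \<Sum>s\<in>S. w s * u s r) = (\<Sum>s\<in>S. w s * Rfun n F f (u s))"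
proof -
  have "Rfun n F f (\<lambda>r. \<Sum>s\<in>S. w s * u s r) = (\<Sum>r=1..n. \<Sum>s\<in>S. w s * (beta n F f r * u s r))"
    unfolding Rfun_def by (simp add: sum_distrib_left mult_ac)
  also have "\<dots> = (\<Sum>s\<in>S. \<Sum>r=1..n. w s * (beta n F f r * u s r))" by (rule sum.swap)
  finally show ?thesis unfolding Rfun_def by (simp add: sum_distrib_left)
qed

lemma Lfun_sum:
  assumes "finite S"
  shows "Lfun n F f (\<lambda>r. \<Sum>s\<in>S. w s * u s r) = (\<Sum>s\<in>S. w s * Lfun n F f (u s))"
proof -
  let ?b = "beta n F f"
  have "(\<Sum>r=1..n. \<Sum>t=1..<r. (?b r + ?b t) * ((\<Sum>s\<in>S. w s * u s t) - (\<Sum>s\<in>S. w s * u s r)))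
      = (\<Sum>r=1..n. \<Sum>t=1..<r. \<Sum>s\<in>S. w s * ((?b r + ?b t) * (u s t - u s r)))"
    by (simp add: sum_subtractf[symmetric] sum_distrib_left algebra_simps)
  also have "\<dots> = (\<Sum>r=1..n. \<Sum>s\<in>S. \<Sum>t=1..<r. w s * ((?b r + ?b t) * (u s t - u s r)))"
    by (rule sum.cong[OF refl], rule sum.swap)
  also have "\<dots> = (\<Sum>s\<in>S. \<Sum>r=1..n. \<Sum>t=1..<r. w s * ((?b r + ?b t) * (u s t - u s r)))"
    by (rule sum.swap)
  finally show ?thesis unfolding Lfun_def by (simp add: sum_distrib_left mult_ac)
qed

lemma Mfun_sum:
  assumes "finite S"
  shows "Mfun n F f (\<lambda>r. \<Sum>s\<in>S. w s * u s r) \<theta> = (\<Sum>s\<in>S. w s * Mfun n F f (u s) \<theta>)"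
  unfolding Mfun_def Rfun_sum[OF assms] Lfun_sum[OF assms]
  by (simp add: sum.distrib sum_distrib_left algebra_simps)

lemma Mfun_cong:
  assumes "\<And>r. r \<in> {1..n} \<Longrightarrow> v r = v' r"
  shows "Mfun n F f v \<theta> = Mfun n F f v' \<theta>"
  unfolding Mfun_def Rfun_def Lfun_def using assms
  by (intro arg_cong2[where f="\<lambda>x y. x + \<theta> * (- (1 / real n) * y)"] sum.cong refl) auto

lemma prizeV_convex_combination_topv:
  assumes v: "v \<in> prizeV n"
  obtains w where "\<And>s. s \<in> {1..n} \<Longrightarrow> 0 \<le> w s" "(\<Sum>s=1..n. w s) = 1"
    "\<And>r. r \<in> {1..n} \<Longrightarrow> v r = (\<Sum>s=1..n. w s * topv s r)"
proof
  define v0 where "v0 r = (if r \<le> n then v r else 0)" for r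
  define w where "w s = real s * (v0 s - v0 (Suc s))" for s
  show "0 \<le> w s" if "s \<in> {1..n}" for s
    using v that unfolding prizeV_def w_def v0_def by (cases "s = n") (auto simp: le_Suc_eq)
  show decomp: "v r = (\<Sum>s=1..n. w s * topv s r)" if r: "r \<in> {1..n}" for r
  proof -
    have "(\<Sum>s=1..n. w s * topv s r) = (\<Sum>s=r..n. w s * topv s r)"
      by (rule sum.mono_neutral_right) (use r in \<open>auto simp: topv_def\<close>)
    also have "\<dots> = - (\<Sum>s=r..n. v0 (Suc s) - v0 s)"
      by (subst sum_negf[symmetric], rule sum.cong) (use r in \<open>auto simp: topv_def w_def\<close>)
    also have "\<dots> = v r"
      using sum_Suc_diff[of r n v0] r by (simp add: v0_def)
    finally show ?thesis by simp
  qed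
  have "1 = (\<Sum>r=1..n. \<Sum>s=1..n. w s * topv s r)"
    using v decomp by (simp add: prizeV_def)
  also have "\<dots> = (\<Sum>s=1..n. w s * (\<Sum>r=1..n. topv s r))"
    by (subst sum.swap) (simp add: sum_distrib_left)
  also have "\<dots> = (\<Sum>s=1..n. w s)"
    using sum_topv by (intro sum.cong) auto
  finally show "(\<Sum>s=1..n. w s) = 1" by simp
qed

lemma Mfun_le_if_topv_le:
  assumes v: "v \<in> prizeV n" and C: "\<And>s. s \<in> {1..n} \<Longrightarrow> Mfun n F f (topv s) \<theta> \<le> C"
  shows "Mfun n F f v \<theta> \<le> C"
proof -
  obtain w where w: "\<And>s. s \<in> {1..n} \<Longrightarrow> 0 \<le> w s" "(\<Sum>s=1..n. w s) = 1"
    "\<And>r. r \<in> {1..n} \<Longrightarrow> v r = (\<Sum>s=1..n. w s * topv s r)"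
    using prizeV_convex_combination_topv[OF v] by blast
  have "Mfun n F f v \<theta> = Mfun n F f (\<lambda>r. \<Sum>s=1..n. w s * topv s r) \<theta>"
    by (rule Mfun_cong) (rule w(3))
  also have "\<dots> = (\<Sum>s=1..n. w s * Mfun n F f (topv s) \<theta>)"
    by (rule Mfun_sum) simp
  also have "\<dots> \<le> (\<Sum>s=1..n. w s * C)"
    by (intro sum_mono mult_left_mono C w(1))
  also have "\<dots> = C" using w(2) by (simp add: sum_distrib_right[symmetric])
  finally show ?thesis .
qed

definition maximizers :: "'a set \<Rightarrow> ('a \<Rightarrow> 'b::linorder) \<Rightarrow> 'a set" where
  "maximizers S g = {r \<in> S. \<forall>k\<in>S. g k \<le> g r}"

lemma finite_maximizers: "finite S \<Longrightarrow> finite (maximizers S g)"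
  by (simp add: maximizers_def)

lemma maximizers_nonempty:
  assumes "finite S" "S \<noteq> {}"
  shows "maximizers S g \<noteq> {}"
proof -
  have "Max (g ` S) \<in> g ` S" using assms by simp
  then obtain r where "r \<in> S" "g r = Max (g ` S)" by auto
  then have "r \<in> maximizers S g" using assms(1) by (simp add: maximizers_def)
  then show ?thesis by blast
qed

lemma Max_maximizers_mono:
  fixes S :: "'a::linorder set"
  assumes S: "finite S" "S \<noteq> {}"
    and crossing: "\<And>r' r. r' \<in> S \<Longrightarrow> r \<in> S \<Longrightarrow> r' < r \<Longrightarrow> g r' \<le> g r \<Longrightarrow> h r' \<le> h r"
  shows "Max (maximizers S g) \<le> Max (maximizers S h)"
proof (rule ccontr)
  let ?R = "Max (maximizers S g)" and ?R' = "Max (maximizers S h)"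
  note fin = finite_maximizers[OF S(1)]
  have R: "?R \<in> maximizers S g" and R': "?R' \<in> maximizers S h"
    by (intro Max_in fin maximizers_nonempty S)+
  assume "\<not> ?R \<le> ?R'"
  then have "h ?R' \<le> h ?R"
    using R R' by (intro crossing) (auto simp: maximizers_def)
  with R R' have "?R \<in> maximizers S h" by (force simp: maximizers_def)
  then have "?R \<le> ?R'" by (rule Max_ge[OF fin])
  with \<open>\<not> ?R \<le> ?R'\<close> show False by simp
qed

lemma Min_maximizers_mono:
  fixes S :: "'a::linorder set"
  assumes S: "finite S" "S \<noteq> {}"
    and crossing: "\<And>r' r. r' \<in> S \<Longrightarrow> r \<in> S \<Longrightarrow> r' < r \<Longrightarrow> g r' < g r \<Longrightarrow> h r' < h r"
  shows "Min (maximizers S g) \<le> Min (maximizers S h)"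
proof (rule ccontr)
  let ?R = "Min (maximizers S g)" and ?R' = "Min (maximizers S h)"
  note fin = finite_maximizers[OF S(1)]
  have R: "?R \<in> maximizers S g" and R': "?R' \<in> maximizers S h"
    by (intro Min_in fin maximizers_nonempty S)+
  assume "\<not> ?R \<le> ?R'"
  have "\<not> h ?R' < h ?R" using R R' by (auto simp: maximizers_def not_less)
  then have "g ?R \<le> g ?R'"
    using R R' \<open>\<not> ?R \<le> ?R'\<close> crossing[of ?R' ?R] by (force simp: maximizers_def)
  with R R' have "?R' \<in> maximizers S g" by (force simp: maximizers_def)
  then have "?R \<le> ?R'" by (rule Min_le[OF fin])
  with \<open>\<not> ?R \<le> ?R'\<close> show False by simp
qed

lemma argmaxA_eq_maximizers: "argmaxA n F f \<theta> = maximizers {1..n-1} (Acoef n F f \<theta>)"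
  by (simp add: argmaxA_def maximizers_def)

lemma loss_aversion_weight_pos:
  assumes "0 \<le> \<theta>" "\<theta> \<le> 1" "1 \<le> r" "0 < n"
  shows "0 < 1 + \<theta> * (2 * real r / real n - 1)"
proof -
  have pos: "0 < 2 * real r / real n" using assms by simp
  have "1 + \<theta> * (2 * real r / real n - 1) = (1 - \<theta>) + \<theta> * (2 * real r / real n)"
    by (simp add: algebra_simps)
  also have "0 < \<dots>"
  proof (cases "\<theta> = 1")
    case True
    with pos show ?thesis by simp
  next
    case False
    with assms have "0 < 1 - \<theta>" by simp
    with pos assms(1) show ?thesis by (simp add: add_pos_nonneg)
  qed
  finally show ?thesis .
qed

lemma reweighting_preserves_le:
  fixes p q p' q' x y :: real
  assumes "0 < p" "0 < p'" "0 \<le> y" "p' * q \<le> p * q'"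
  shows "p * x \<le> q * y \<Longrightarrow> p' * x \<le> q' * y"
    and "p * x < q * y \<Longrightarrow> p' * x < q' * y"
proof -
  have ratio: "p' * (q * y) \<le> p * (q' * y)"
    using mult_right_mono[OF assms(4,3)] by (simp add: mult_ac)
  have swap: "p * (p' * x) = p' * (p * x)" by (simp add: mult_ac)
  show "p' * x \<le> q' * y" if "p * x \<le> q * y"
  proof -
    have "p * (p' * x) \<le> p * (q' * y)"
      unfolding swap using mult_left_mono[OF that, of p'] ratio assms(2) by linarith
    then show ?thesis using assms(1) by simp
  qed
  show "p' * x < q' * y" if "p * x < q * y"
  proof -
    have "p * (p' * x) < p * (q' * y)"
      unfolding swap using mult_strict_left_mono[OF that assms(2)] ratio by linarith
    then show ?thesis using assms(1) by simp
  qed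
qed

lemma Acoef_single_crossing:
  assumes noise: "noise_dist F f" and th: "0 \<le> \<theta>" "\<theta> \<le> \<theta>'" "\<theta>' \<le> 1"
    and r: "r' \<in> {1..n-1}" "r \<in> {1..n-1}" "r' < r"
  shows "Acoef n F f \<theta> r' \<le> Acoef n F f \<theta> r \<Longrightarrow> Acoef n F f \<theta>' r' \<le> Acoef n F f \<theta>' r"
    and "Acoef n F f \<theta> r' < Acoef n F f \<theta> r \<Longrightarrow> Acoef n F f \<theta>' r' < Acoef n F f \<theta>' r"
proof -
  define a where "a k = 2 * real k / real n - 1" for k
  have A: "Acoef n F f t k = (1 + t * a k) * (Bsum n F f k / real k)" for t k
    by (simp add: Acoef_def a_def)
  have n: "0 < n" using r by auto
  have "a r' \<le> a r" using r by (simp add: a_def divide_right_mono)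
  then have cross: "(1 + \<theta>' * a r') * (1 + \<theta> * a r) \<le> (1 + \<theta> * a r') * (1 + \<theta>' * a r)"
    using th mult_nonneg_nonneg[of "\<theta>' - \<theta>" "a r - a r'"] by (simp add: algebra_simps)
  have pos: "0 < 1 + \<theta> * a r'" "0 < 1 + \<theta>' * a r'"
    using loss_aversion_weight_pos[of _ r' n] th r n by (auto simp: a_def)
  have "0 \<le> Bsum n F f r / real r" using Bsum_nonneg[OF noise] r by simp
  note transfer = reweighting_preserves_le[OF pos this cross]
  show "Acoef n F f \<theta> r' \<le> Acoef n F f \<theta> r \<Longrightarrow> Acoef n F f \<theta>' r' \<le> Acoef n F f \<theta>' r"
    and "Acoef n F f \<theta> r' < Acoef n F f \<theta> r \<Longrightarrow> Acoef n F f \<theta>' r' < Acoef n F f \<theta>' r"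
    unfolding A by (fact transfer)+
qed

lemma Acoef_le_argmaxA:
  assumes noise: "noise_dist F f" and n: "n \<ge> 2" and th: "0 \<le> \<theta>" "\<theta> \<le> 1"
    and rs: "rs \<in> argmaxA n F f \<theta>" and s: "s \<in> {1..n}"
  shows "Acoef n F f \<theta> s \<le> Acoef n F f \<theta> rs"
proof (cases "s = n")
  case True
  have rs1: "1 \<le> rs" "rs \<le> n - 1" using rs by (auto simp: argmaxA_def)
  have "Acoef n F f \<theta> n = 0" by (simp add: Acoef_def Bsum_last[OF noise n])
  moreover have "0 \<le> Acoef n F f \<theta> rs"
    unfolding Acoef_def using loss_aversion_weight_pos[OF th rs1(1), of n] Bsum_nonneg[OF noise rs1] n
    by simp
  ultimately show ?thesis using True by simp
next
  case False
  with rs s show ?thesis by (auto simp: argmaxA_def)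
qed

theorem proposition2:
  fixes n :: nat and F f :: "real \<Rightarrow> real" and \<theta> :: real
  assumes n2: "n \<ge> 2"
    and noise: "noise_dist F f"
    and th: "0 \<le> \<theta>" "\<theta> \<le> 1"
  shows
    "(\<forall>rs\<in>argmaxA n F f \<theta>.
        topv rs \<in> prizeV n \<and>
        (\<forall>v\<in>prizeV n. Mfun n F f v \<theta> \<le> Mfun n F f (topv rs) \<theta>) \<and>
        Mfun n F f (topv rs) \<theta> = Max (Acoef n F f \<theta> ` {1..n-1}) \<and>
        (\<forall>c. admissible_cost c \<longrightarrow>
           (\<forall>v\<in>prizeV n. \<forall>x x'. 0 \<le> x \<and> 0 \<le> x' \<and>
               deriv c x = Mfun n F f v \<theta> \<and> deriv c x' = Mfun n F f (topv rs) \<theta>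
               \<longrightarrow> x \<le> x')))
     \<and> (\<forall>\<theta>'. \<theta> < \<theta>' \<and> \<theta>' \<le> 1 \<longrightarrow>
          Max (argmaxA n F f \<theta>) \<le> Max (argmaxA n F f \<theta>') \<and>
          Min (argmaxA n F f \<theta>) \<le> Min (argmaxA n F f \<theta>'))"
proof (intro conjI ballI allI impI)
  fix rs assume rs: "rs \<in> argmaxA n F f \<theta>"
  then have rs1: "1 \<le> rs" "rs \<le> n" by (auto simp: argmaxA_def)
  have Mtop: "Mfun n F f (topv s) \<theta> = Acoef n F f \<theta> s" if "s \<in> {1..n}" for s
    using Mfun_topv[OF _ _ Bsum_last[OF noise n2]] that by simp
  show "topv rs \<in> prizeV n" by (rule topv_in_prizeV[OF rs1])
  show opt: "Mfun n F f v \<theta> \<le> Mfun n F f (topv rs) \<theta>" if "v \<in> prizeV n" for v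
    using Mfun_le_if_topv_le[OF that] Acoef_le_argmaxA[OF noise n2 th rs] Mtop rs1 by simp
  show "Mfun n F f (topv rs) \<theta> = Max (Acoef n F f \<theta> ` {1..n-1})"
    using rs Mtop rs1 by (intro Max_eqI[symmetric]) (auto simp: argmaxA_def)
  show "x \<le> x'" if "admissible_cost c" "v \<in> prizeV n"
    "0 \<le> x \<and> 0 \<le> x' \<and> deriv c x = Mfun n F f v \<theta> \<and> deriv c x' = Mfun n F f (topv rs) \<theta>"
    for c v x x'
    using admissible_cost_deriv_le_imp_le[OF that(1)] opt[OF that(2)] that(3) by simp
next
  fix \<theta>' assume th': "\<theta> < \<theta>' \<and> \<theta>' \<le> 1"
  have S: "finite {1..n-1}" "{1..n-1} \<noteq> {}" using n2 by auto
  note crossing = Acoef_single_crossing[OF noise th(1) less_imp_le[OF conjunct1[OF th']] conjunct2[OF th']]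
  show "Max (argmaxA n F f \<theta>) \<le> Max (argmaxA n F f \<theta>')"
    unfolding argmaxA_eq_maximizers by (rule Max_maximizers_mono[OF S crossing(1)])
  show "Min (argmaxA n F f \<theta>) \<le> Min (argmaxA n F f \<theta>')"
    unfolding argmaxA_eq_maximizers by (rule Min_maximizers_mono[OF S crossing(2)])
qed

end
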